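(* Let $A$ and $B$ be rings, $f: A\to B$ a ring homomorphism and $J$ a proper ideal of $B$ such that $J$ is semicommutative. If $A$ is a weak Armendariz ring, then $A\bowtie^{f}J$ is a weak Armendariz ring.
   Context: All rings are associative with identity (not necessarily commutative), ring homomorphisms are unital, and ideals are two-sided. $\mathrm{nil}(R)$ denotes the set of nilpotent elements of a ring $R$. For a ring homomorphism $f:A\to B$ and an ideal $J$ of $B$, the amalgamation is the subring $A\bowtie^{f}J=\{(a,f(a)+j)\mid a\in A,\ j\in J\}$ of $A\times B$. A ring $R$ (possibly without identity, e.g. an ideal regarded as a ring) is semicommutative if for all $a,b\in R$, $ab=0$ implies $aRb=0$. A ring $R$ is weak Armendariz if whenever $p(x)=\sum_{i=0}^n a_ix^i$ and $q(x)=\sum_{j=0}^m b_jx^j$ in $R[x]$ satisfy $p(x)q(x)=0$, then $a_ib_j\in\mathrm{nil}(R)$ for all $i,j$. *)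

theory Defs
  imports Main "HOL-Library.Product_Plus"
begin

instantiation prod :: (times, times) times
begin
definition times_prod_def: "x * y = (fst x * fst y, snd x * snd y)"
instance ..
end

instantiation prod :: (one, one) one
begin
definition one_prod_def: "1 = (1, 1)"
instance ..
end

instance prod :: (ring_1, ring_1) ring_1
  by standard (auto simp: times_prod_def one_prod_def zero_prod_def plus_prod_def
      algebra_simps prod_eq_iff)

definition ring_hom :: "('a::ring_1 \<Rightarrow> 'b::ring_1) \<Rightarrow> bool" where
  "ring_hom f \<longleftrightarrow> f 1 = 1 \<and> (\<forall>x y. f (x + y) = f x + f y) \<and> (\<forall>x y. f (x * y) = f x * f y)"

definition two_sided_ideal :: "'b::ring_1 set \<Rightarrow> bool" where
  "two_sided_ideal J \<longleftrightarrow> 0 \<in> J \<and> (\<forall>x\<in>J. \<forall>y\<in>J. x + y \<in> J) \<and> (\<forall>x\<in>J. - x \<in> J)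
     \<and> (\<forall>r x. x \<in> J \<longrightarrow> r * x \<in> J \<and> x * r \<in> J)"

text \<open>An ideal J regarded as a ring without identity is semicommutative.\<close>
definition semicommutative_on :: "'b::ring_1 set \<Rightarrow> bool" where
  "semicommutative_on J \<longleftrightarrow>
     (\<forall>a\<in>J. \<forall>b\<in>J. a * b = 0 \<longrightarrow> (\<forall>r\<in>J. a * r * b = 0))"

definition amalg :: "('a::ring_1 \<Rightarrow> 'b::ring_1) \<Rightarrow> 'b set \<Rightarrow> ('a \<times> 'b) set" where
  "amalg f J = {(a, f a + j) | a j. j \<in> J}"

definition nil_on :: "'r::ring_1 set \<Rightarrow> 'r set" where
  "nil_on S = {x \<in> S. \<exists>k. x ^ k = 0}"

text \<open>Polynomials over S
  are represented by coefficient sequences p with p i \<in> S for all i and p i = 0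
  for i > deg; the product pq has k-th coefficient \<Sum>i\<le>k. p i * q (k - i).\<close>
definition weak_armendariz_on :: "'r::ring_1 set \<Rightarrow> bool" where
  "weak_armendariz_on S \<longleftrightarrow>
     (\<forall>(p::nat \<Rightarrow> 'r) q n m.
        (\<forall>i. p i \<in> S) \<and> (\<forall>i. q i \<in> S) \<and> (\<forall>i>n. p i = 0) \<and> (\<forall>j>m. q j = 0)
        \<and> (\<forall>k. (\<Sum>i\<le>k. p i * q (k - i)) = 0)
        \<longrightarrow> (\<forall>i j. p i * q j \<in> nil_on S))"

end

theory Submission
  imports Defs
begin

text \<open>Let \<open>pq = 0\<close> over \<open>A \<bowtie>\<^sup>f J\<close> and \<open>z = p\<^sub>i q\<^sub>j\<close>. Projecting to \<open>A\<close>, weak Armendariz gives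
  \<open>fst z\<^sup>n = 0\<close>, hence \<open>d = (snd z)\<^sup>n \<in> J\<close>. The series \<open>d\<cdot>snd p\<close> and \<open>snd q\<cdot>d\<close> have coefficients
  in \<open>J\<close> and zero product, and their \<open>(i, j)\<close> coefficient product is \<open>(snd z)\<^sup>2\<^sup>n\<^sup>+\<^sup>1\<close>. So it suffices
  that in a semicommutative ring without identity the nilpotent elements form an ideal and
  zero products of power series have nilpotent coefficient products; both follow from
  semicommutativity by annihilator arguments.\<close>

lemma power_mult_shift: "y * (x * y) ^ n = (y * x) ^ n * y"
  for x y :: "'a::monoid_mult"
  by (induction n) (simp_all add: power_Suc2 mult.assoc[symmetric], simp add: mult.assoc)

locale semicommutative_subrng =
  fixes J :: "'b::ring_1 set"
  assumes zero_mem: "0 \<in> J"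
    and add_mem: "x \<in> J \<Longrightarrow> y \<in> J \<Longrightarrow> x + y \<in> J"
    and uminus_mem: "x \<in> J \<Longrightarrow> - x \<in> J"
    and mult_mem: "x \<in> J \<Longrightarrow> y \<in> J \<Longrightarrow> x * y \<in> J"
    and semicommutative: "semicommutative_on J"

lemma semicommutative_subrng_if_ideal:
  "two_sided_ideal J \<Longrightarrow> semicommutative_on J \<Longrightarrow> semicommutative_subrng J"
  unfolding two_sided_ideal_def by unfold_locales auto

text \<open>\<open>x\<close> is killed from both sides by every pair of multipliers from \<open>J \<union> {1}\<close> that kills
  \<open>a\<^sup>m\<close>. Semicommutativity makes this relation multiplicative in \<open>(m, x)\<close>.\<close>
definition dominated_by_pow :: "'b::ring_1 set \<Rightarrow> 'b \<Rightarrow> nat \<Rightarrow> 'b \<Rightarrow> bool" where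
  "dominated_by_pow J a m x \<longleftrightarrow> x \<in> insert 1 J \<and>
     (\<forall>w\<in>insert 1 J. \<forall>y\<in>insert 1 J. w * a ^ m * y = 0 \<longrightarrow> w * x * y = 0)"

context semicommutative_subrng
begin

lemma mult_mem_insert_one: "x \<in> insert 1 J \<Longrightarrow> y \<in> insert 1 J \<Longrightarrow> x * y \<in> insert 1 J"
  using mult_mem by auto

lemma mult_mem_insert_one_left: "x \<in> insert 1 J \<Longrightarrow> y \<in> J \<Longrightarrow> x * y \<in> J"
  using mult_mem by auto

lemma power_mem_insert_one: "a \<in> J \<Longrightarrow> a ^ m \<in> insert 1 J"
  by (induction m) (simp, metis mult_mem_insert_one insertI2 power_Suc)

lemma semicommutative_insert_one:
  "w \<in> insert 1 J \<Longrightarrow> y \<in> insert 1 J \<Longrightarrow> s \<in> J \<Longrightarrow> w * y = 0 \<Longrightarrow> w * s * y = 0"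
  using semicommutative unfolding semicommutative_on_def by auto

lemma dominated_by_pow_0: "x \<in> insert 1 J \<Longrightarrow> dominated_by_pow J a 0 x"
  unfolding dominated_by_pow_def using semicommutative_insert_one by auto

lemma dominated_by_pow_1: "a \<in> J \<Longrightarrow> dominated_by_pow J a 1 a"
  unfolding dominated_by_pow_def by auto

lemma dominated_by_pow_zero: "dominated_by_pow J a m 0"
  unfolding dominated_by_pow_def using zero_mem by auto

lemma dominated_by_pow_add:
  "dominated_by_pow J a m x \<Longrightarrow> dominated_by_pow J a m y \<Longrightarrow> x \<in> J \<Longrightarrow> y \<in> J
    \<Longrightarrow> dominated_by_pow J a m (x + y)"
  unfolding dominated_by_pow_def using add_mem by (auto simp: distrib_left distrib_right)

lemma dominated_by_pow_mult:
  assumes a: "a \<in> J" and x1: "dominated_by_pow J a m1 x1" and x2: "dominated_by_pow J a m2 x2"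
  shows "dominated_by_pow J a (m1 + m2) (x1 * x2)"
  unfolding dominated_by_pow_def
proof (intro conjI ballI impI)
  show "x1 * x2 \<in> insert 1 J"
    using x1 x2 mult_mem_insert_one unfolding dominated_by_pow_def by blast
  fix w y assume w: "w \<in> insert 1 J" and y: "y \<in> insert 1 J"
    and "w * a ^ (m1 + m2) * y = 0"
  then have "w * a ^ m1 * (a ^ m2 * y) = 0" by (simp add: power_add mult.assoc)
  moreover have "a ^ m2 * y \<in> insert 1 J" using mult_mem_insert_one power_mem_insert_one a y by blast
  ultimately have "w * x1 * (a ^ m2 * y) = 0" using x1 w unfolding dominated_by_pow_def by blast
  then have "(w * x1) * a ^ m2 * y = 0" by (simp add: mult.assoc)
  moreover have "w * x1 \<in> insert 1 J"
    using mult_mem_insert_one w x1 unfolding dominated_by_pow_def by blast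
  ultimately have "(w * x1) * x2 * y = 0" using x2 y unfolding dominated_by_pow_def by blast
  then show "w * (x1 * x2) * y = 0" by (simp add: mult.assoc)
qed

lemma dominated_by_pow_power:
  assumes "a \<in> J" "dominated_by_pow J a m x"
  shows "dominated_by_pow J a (m * k) (x ^ k)"
proof (induction k)
  case 0
  then show ?case by (simp add: dominated_by_pow_0)
next
  case (Suc k)
  then show ?case using dominated_by_pow_mult[OF assms(1) Suc assms(2)]
    by (metis power_Suc2 add.commute mult_Suc_right)
qed

lemma dominated_by_pow_nilpotent: "dominated_by_pow J a n x \<Longrightarrow> a ^ n = 0 \<Longrightarrow> x = 0"
  unfolding dominated_by_pow_def by (metis insertI1 mult_1 mult_1_right)

text \<open>Every word in the expansion of \<open>(a + b)\<^sup>k\<close> has \<open>k < p + q\<close> letters, hence at least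
  \<open>p\<close> letters \<open>a\<close> or at least \<open>q\<close> letters \<open>b\<close>.\<close>
lemma power_add_decompose:
  assumes a: "a \<in> J" and b: "b \<in> J" and pq: "p + q = Suc k"
  shows "\<exists>y z. (a + b) ^ k = y + z \<and> dominated_by_pow J a p y \<and> dominated_by_pow J b q z"
proof -
  have edge: "\<exists>y z. (a + b) ^ k = y + z \<and> dominated_by_pow J a p y \<and> dominated_by_pow J b q z"
    if "p = 0 \<or> q = 0" for k p q
  proof -
    have "(a + b) ^ k \<in> insert 1 J" using power_mem_insert_one add_mem a b by blast
    then show ?thesis using that dominated_by_pow_0 dominated_by_pow_zero by (metis add_0 add_0_right)
  qed
  show ?thesis using pq
  proof (induction k arbitrary: p q)
    case 0
    then have "p = 0 \<or> q = 0" by linarith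
    then show ?case using edge by blast
  next
    case (Suc k)
    show ?case
    proof (cases "p = 0 \<or> q = 0")
      case True
      then show ?thesis using edge by blast
    next
      case False
      then obtain p' q' where p: "p = Suc p'" and q: "q = Suc q'"
        using not0_implies_Suc by blast
      obtain y1 z1 where h1: "(a + b) ^ k = y1 + z1"
        "dominated_by_pow J a p' y1" "dominated_by_pow J b q z1"
        using Suc.IH[of p' q] Suc.prems p by auto
      obtain y2 z2 where h2: "(a + b) ^ k = y2 + z2"
        "dominated_by_pow J a p y2" "dominated_by_pow J b q' z2"
        using Suc.IH[of p q'] Suc.prems q by auto
      have "(a + b) ^ Suc k = (y1 + z1) * a + (y2 + z2) * b"
        by (metis power_Suc2 distrib_left h1(1) h2(1))
      also have "\<dots> = (y1 * a + y2 * b) + (z1 * a + z2 * b)"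
        by (simp add: algebra_simps)
      finally have split: "(a + b) ^ Suc k = (y1 * a + y2 * b) + (z1 * a + z2 * b)" .
      have "dominated_by_pow J a p (y1 * a)"
        using dominated_by_pow_mult[OF a h1(2) dominated_by_pow_1[OF a]] p by simp
      moreover have "dominated_by_pow J a p (y2 * b)"
        using dominated_by_pow_mult[OF a h2(2) dominated_by_pow_0[of b a]] b by simp
      moreover have "dominated_by_pow J b q (z1 * a)"
        using dominated_by_pow_mult[OF b h1(3) dominated_by_pow_0[of a b]] a by simp
      moreover have "dominated_by_pow J b q (z2 * b)"
        using dominated_by_pow_mult[OF b h2(3) dominated_by_pow_1[OF b]] q by simp
      moreover have "y1 * a \<in> J" "y2 * b \<in> J" "z1 * a \<in> J" "z2 * b \<in> J"
        using h1 h2 a b mult_mem_insert_one_left unfolding dominated_by_pow_def by blast+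
      ultimately show ?thesis using split dominated_by_pow_add by blast
    qed
  qed
qed

lemma nil_on_zero: "0 \<in> nil_on J"
  unfolding nil_on_def using zero_mem power_one_right[of "0::'b"] by blast

lemma nil_on_add:
  assumes "a \<in> nil_on J" "b \<in> nil_on J"
  shows "a + b \<in> nil_on J"
proof -
  obtain m n where a: "a \<in> J" "a ^ m = 0" and b: "b \<in> J" "b ^ n = 0"
    using assms unfolding nil_on_def by blast
  obtain y z where "(a + b) ^ (m + n) = y + z"
    "dominated_by_pow J a m y" "dominated_by_pow J b (Suc n) z"
    using power_add_decompose[OF a(1) b(1), of m "Suc n" "m + n"] by auto
  moreover have "b ^ Suc n = 0" using b by simp
  ultimately have "(a + b) ^ (m + n) = 0"
    using dominated_by_pow_nilpotent a(2) by (metis add.right_neutral)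
  then show ?thesis using a b add_mem unfolding nil_on_def by blast
qed

lemma nil_on_uminus:
  assumes "a \<in> nil_on J"
  shows "- a \<in> nil_on J"
proof -
  obtain n where a: "a \<in> J" "a ^ n = 0" using assms unfolding nil_on_def by blast
  have "(- a) ^ n = (- 1) ^ n * a ^ n" by (rule power_minus)
  with a show ?thesis using uminus_mem unfolding nil_on_def by auto
qed

lemma nil_on_sum: "finite S \<Longrightarrow> (\<And>l. l \<in> S \<Longrightarrow> T l \<in> nil_on J) \<Longrightarrow> sum T S \<in> nil_on J"
  by (induction S rule: finite_induct) (simp_all add: nil_on_zero nil_on_add)

lemma nil_on_if_dominated:
  assumes a: "a \<in> nil_on J" and x: "dominated_by_pow J a 1 x" "x \<in> J"
  shows "x \<in> nil_on J"
proof -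
  obtain n where "a \<in> J" "a ^ n = 0" using a unfolding nil_on_def by blast
  then have "x ^ n = 0"
    using dominated_by_pow_power[OF _ x(1), of n] dominated_by_pow_nilpotent by simp
  then show ?thesis using x(2) unfolding nil_on_def by blast
qed

lemma nil_on_mult_right:
  assumes "a \<in> nil_on J" "r \<in> J"
  shows "a * r \<in> nil_on J"
proof -
  have a: "a \<in> J" using assms(1) unfolding nil_on_def by blast
  have "dominated_by_pow J a (1 + 0) (a * r)"
    using dominated_by_pow_mult[OF a dominated_by_pow_1[OF a] dominated_by_pow_0] assms(2) by blast
  then show ?thesis using nil_on_if_dominated assms mult_mem a by simp
qed

lemma nil_on_mult_left:
  assumes "a \<in> nil_on J" "r \<in> J"
  shows "r * a \<in> nil_on J"
proof -
  have a: "a \<in> J" using assms(1) unfolding nil_on_def by blast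
  have "dominated_by_pow J a (0 + 1) (r * a)"
    using dominated_by_pow_mult[OF a dominated_by_pow_0 dominated_by_pow_1[OF a]] assms(2) by blast
  then show ?thesis using nil_on_if_dominated assms mult_mem a by simp
qed

lemma nil_on_commute:
  assumes "x * y \<in> nil_on J" "x \<in> J" "y \<in> J"
  shows "y * x \<in> nil_on J"
proof -
  obtain n where "(x * y) ^ n = 0" using assms unfolding nil_on_def by blast
  moreover have "(y * x) ^ Suc n = y * (x * y) ^ n * x"
    by (metis power_Suc2 power_mult_shift mult.assoc)
  ultimately have "(y * x) ^ Suc n = 0" by simp
  then show ?thesis using assms mult_mem unfolding nil_on_def by blast
qed

lemma nil_on_square:
  assumes "x * x \<in> nil_on J" "x \<in> J"
  shows "x \<in> nil_on J"
proof -
  obtain n where "(x * x) ^ n = 0" using assms(1) unfolding nil_on_def by blast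
  then have "x ^ (2 * n) = 0" by (simp add: power_mult power2_eq_square)
  then show ?thesis using assms(2) unfolding nil_on_def by blast
qed

text \<open>Multiplying the \<open>k\<close>-th coefficient of \<open>UV\<close> on the right by \<open>U i\<close> leaves
  \<open>U i V\<^sub>k\<^sub>-\<^sub>i U i\<close> modulo nilpotents: the terms with \<open>l < i\<close> by the first hypothesis, those with
  \<open>l > i\<close> after commuting \<open>U i V\<^sub>k\<^sub>-\<^sub>l\<close> by the second.\<close>
lemma convolution_zero_step:
  fixes U V :: "nat \<Rightarrow> 'b"
  assumes U: "\<And>l. U l \<in> J" and V: "\<And>l. V l \<in> J"
    and conv: "(\<Sum>l\<le>k. U l * V (k - l)) = 0" and "i \<le> k"
    and below: "\<And>l. l < i \<Longrightarrow> U l * V (k - l) \<in> nil_on J"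
    and above: "\<And>l. i < l \<Longrightarrow> l \<le> k \<Longrightarrow> U i * V (k - l) \<in> nil_on J"
  shows "U i * V (k - i) \<in> nil_on J"
proof -
  define T where "T l = U l * V (k - l) * U i" for l
  have sum_T: "(\<Sum>l\<le>k. T l) = 0"
    using conv unfolding T_def by (simp flip: sum_distrib_right)
  have others: "T l \<in> nil_on J" if "l \<in> {..k} - {i}" for l
  proof (cases "l < i")
    case True
    then show ?thesis unfolding T_def using below nil_on_mult_right U by blast
  next
    case False
    then have "V (k - l) * U i \<in> nil_on J" using above that nil_on_commute U V by auto
    then have "U l * (V (k - l) * U i) \<in> nil_on J" using nil_on_mult_left U by blast
    then show ?thesis unfolding T_def by (simp add: mult.assoc)
  qed
  have "T i = - (\<Sum>l\<in>{..k} - {i}. T l)"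
    using sum_T sum.remove[of "{..k}" i T] \<open>i \<le> k\<close> by (simp add: eq_neg_iff_add_eq_0)
  moreover have "(\<Sum>l\<in>{..k} - {i}. T l) \<in> nil_on J"
    by (rule nil_on_sum) (use others in auto)
  ultimately have "T i \<in> nil_on J" using nil_on_uminus by simp
  then have "(U i * V (k - i)) * (U i * V (k - i)) \<in> nil_on J"
    using nil_on_mult_right V unfolding T_def by (metis mult.assoc)
  then show ?thesis using nil_on_square mult_mem U V by blast
qed

lemma convolution_zero_nil:
  fixes U V :: "nat \<Rightarrow> 'b"
  assumes U: "\<And>l. U l \<in> J" and V: "\<And>l. V l \<in> J"
    and conv: "\<And>k. (\<Sum>l\<le>k. U l * V (k - l)) = 0"
  shows "U i * V j \<in> nil_on J"
proof -
  have "\<forall>i\<le>k. U i * V (k - i) \<in> nil_on J" for k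
  proof (induction k rule: less_induct)
    case (less k)
    note earlier_degrees = less.IH
    show ?case
    proof (intro allI impI)
      fix i assume "i \<le> k"
      then show "U i * V (k - i) \<in> nil_on J"
      proof (induction i rule: less_induct)
        case (less i)
        show ?case
        proof (rule convolution_zero_step[OF U V conv less.prems])
          show "U l * V (k - l) \<in> nil_on J" if "l < i" for l
            using less that by simp
          show "U i * V (k - l) \<in> nil_on J" if "i < l" "l \<le> k" for l
          proof -
            have "i + (k - l) < k" using that by simp
            then have "\<forall>i'\<le>i + (k - l). U i' * V (i + (k - l) - i') \<in> nil_on J"
              by (rule earlier_degrees)
            then show ?thesis by (metis le_add1 add_diff_cancel_left')
          qed
        qed
      qed
    qed
  qed
  then show ?thesis by (metis le_add1 add_diff_cancel_left')
qed

end

lemma fst_mult: "fst (x * y) = fst x * fst y"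
  by (simp add: times_prod_def)

lemma snd_mult: "snd (x * y) = snd x * snd y"
  by (simp add: times_prod_def)

lemma fst_power: "fst (x ^ n) = fst x ^ n"
  by (induction n) (simp_all add: one_prod_def fst_mult)

lemma snd_power: "snd (x ^ n) = snd x ^ n"
  by (induction n) (simp_all add: one_prod_def snd_mult)

lemma nil_on_prodI:
  assumes "z \<in> S" "fst z ^ m = 0" "snd z ^ n = 0"
  shows "z \<in> nil_on S"
proof -
  have "z ^ (m + n) = 0"
    using assms by (simp add: prod_eq_iff power_add fst_mult snd_mult fst_power snd_power)
  then show ?thesis using assms(1) unfolding nil_on_def by blast
qed

lemma ring_hom_zero: "ring_hom f \<Longrightarrow> f 0 = 0"
  unfolding ring_hom_def by (metis add_cancel_right_right add_0)

lemma mem_amalg_iff: "z \<in> amalg f J \<longleftrightarrow> snd z - f (fst z) \<in> J"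
proof
  assume "z \<in> amalg f J"
  then show "snd z - f (fst z) \<in> J" unfolding amalg_def by auto
next
  assume "snd z - f (fst z) \<in> J"
  then show "z \<in> amalg f J" unfolding amalg_def
    by (intro CollectI exI[of _ "fst z"] exI[of _ "snd z - f (fst z)"]) (simp add: prod_eq_iff)
qed

lemma amalg_mult_closed:
  assumes f: "ring_hom f" and J: "two_sided_ideal J"
    and z: "z \<in> amalg f J" and w: "w \<in> amalg f J"
  shows "z * w \<in> amalg f J"
proof -
  define j k where "j = snd z - f (fst z)" and "k = snd w - f (fst w)"
  have "j \<in> J" "k \<in> J" using z w mem_amalg_iff unfolding j_def k_def by blast+
  then have "f (fst z) * k + j * f (fst w) + j * k \<in> J"
    using J unfolding two_sided_ideal_def by blast
  moreover have "snd (z * w) - f (fst (z * w)) = f (fst z) * k + j * f (fst w) + j * k"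
    using f unfolding j_def k_def ring_hom_def by (simp add: fst_mult snd_mult algebra_simps)
  ultimately show ?thesis using mem_amalg_iff by metis
qed

lemma amalg_power_closed:
  assumes f: "ring_hom f" and J: "two_sided_ideal J" and z: "z \<in> amalg f J"
  shows "z ^ n \<in> amalg f J"
proof (induction n)
  case 0
  have "snd (1::'a \<times> 'b) - f (fst (1::'a \<times> 'b)) = 0"
    using f by (simp add: one_prod_def ring_hom_def)
  then show ?case using mem_amalg_iff J unfolding two_sided_ideal_def by (metis power_0)
next
  case (Suc n)
  then show ?case using amalg_mult_closed[OF f J z] by (simp add: power_Suc)
qed

lemma amalg_snd_power_mem:
  assumes "ring_hom f" "two_sided_ideal J" "z \<in> amalg f J" "fst z ^ n = 0"
  shows "snd z ^ n \<in> J"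
  using amalg_power_closed[OF assms(1-3), of n] assms(4) ring_hom_zero[OF assms(1)]
  by (simp add: mem_amalg_iff fst_power snd_power)

lemma weak_armendariz_onD:
  fixes p q :: "nat \<Rightarrow> 'a::ring_1"
  assumes "weak_armendariz_on S" "\<forall>i. p i \<in> S" "\<forall>i. q i \<in> S"
    "\<forall>i>n. p i = 0" "\<forall>j>m. q j = 0" "\<forall>k. (\<Sum>l\<le>k. p l * q (k - l)) = 0"
  shows "p i * q j \<in> nil_on S"
  using assms(1)[unfolded weak_armendariz_on_def, rule_format, of p q n m] assms(2-6) by blast

lemma amalg_coeff_product_nil:
  fixes p q :: "nat \<Rightarrow> 'a::ring_1 \<times> 'b::ring_1"
  assumes f: "ring_hom f" and J: "two_sided_ideal J" and sc: "semicommutative_on J"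
    and p: "\<And>l. p l \<in> amalg f J" and q: "\<And>l. q l \<in> amalg f J"
    and conv: "\<And>k. (\<Sum>l\<le>k. p l * q (k - l)) = 0"
    and nil_fst: "(fst (p i) * fst (q j)) ^ n = 0"
  shows "p i * q j \<in> nil_on (amalg f J)"
proof -
  interpret semicommutative_subrng J using semicommutative_subrng_if_ideal J sc .
  define c where "c = snd (p i * q j)"
  define d where "d = c ^ n"
  have z: "p i * q j \<in> amalg f J" using amalg_mult_closed[OF f J p q] .
  have fst_z: "fst (p i * q j) ^ n = 0" using nil_fst by (simp add: fst_mult)
  have "d \<in> J" using amalg_snd_power_mem[OF f J z fst_z] unfolding d_def c_def .
  then have U: "d * snd (p l) \<in> J" and V: "snd (q l) * d \<in> J" for l
    using J unfolding two_sided_ideal_def by blast+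
  have "(\<Sum>l\<le>k. (d * snd (p l)) * (snd (q (k - l)) * d)) = d * snd (\<Sum>l\<le>k. p l * q (k - l)) * d"
    for k by (simp add: snd_sum snd_mult sum_distrib_left sum_distrib_right mult.assoc)
  then have "(\<Sum>l\<le>k. (d * snd (p l)) * (snd (q (k - l)) * d)) = 0" for k
    using conv by simp
  then have "(d * snd (p i)) * (snd (q j) * d) \<in> nil_on J"
    using convolution_zero_nil[of "\<lambda>l. d * snd (p l)" "\<lambda>l. snd (q l) * d"] U V by blast
  moreover have "(d * snd (p i)) * (snd (q j) * d) = c ^ (2 * n + 1)"
  proof -
    have "(d * snd (p i)) * (snd (q j) * d) = c ^ n * c * c ^ n"
      unfolding c_def d_def by (simp add: snd_mult mult.assoc)
    also have "\<dots> = c ^ (Suc n + n)" by (simp only: power_Suc2[symmetric] power_add[symmetric])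
    finally show ?thesis by (simp add: mult_2)
  qed
  ultimately have "c ^ (2 * n + 1) \<in> nil_on J" by metis
  then obtain e where "(c ^ (2 * n + 1)) ^ e = 0" unfolding nil_on_def by blast
  then show ?thesis
    using nil_on_prodI[OF z fst_z, of "(2 * n + 1) * e"] unfolding c_def by (simp only: power_mult)
qed

theorem theorem4p1:
  fixes f :: "'a::ring_1 \<Rightarrow> 'b::ring_1" and J :: "'b set"
  assumes "ring_hom f"
    and "two_sided_ideal J" and "J \<noteq> UNIV"
    and "semicommutative_on J"
    and "weak_armendariz_on (UNIV :: 'a set)"
  shows "weak_armendariz_on (amalg f J)"
  unfolding weak_armendariz_on_def
proof (intro allI impI)
  fix p q :: "nat \<Rightarrow> 'a \<times> 'b" and n m i j
  assume H: "(\<forall>i. p i \<in> amalg f J) \<and> (\<forall>i. q i \<in> amalg f J) \<and> (\<forall>i>n. p i = 0)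
    \<and> (\<forall>j>m. q j = 0) \<and> (\<forall>k. (\<Sum>i\<le>k. p i * q (k - i)) = 0)"
  have "(\<Sum>l\<le>k. fst (p l) * fst (q (k - l))) = fst (\<Sum>l\<le>k. p l * q (k - l))" for k
    by (simp add: fst_sum fst_mult)
  then have "fst (p i) * fst (q j) \<in> nil_on UNIV"
    using H
    by (intro weak_armendariz_onD[OF assms(5), of "\<lambda>l. fst (p l)" "\<lambda>l. fst (q l)" n m]) simp_all
  then obtain e where e: "(fst (p i) * fst (q j)) ^ e = 0" unfolding nil_on_def by blast
  show "p i * q j \<in> nil_on (amalg f J)"
    using amalg_coeff_product_nil[where p = p and q = q and i = i and j = j, OF assms(1,2,4) _ _ _ e] H
    by simp
qed

end
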